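(* Let $\mathcal R$ be a species of tree on $T_0=\{1,\dots,n\}$. (i) The $\mathbf Q$-vector space with basis $\{A(T):T\in\mathcal R\}$ is a commutative $\mathbf Q$-algebra consisting of symmetric, diagonalizable magic matrices of sum zero. (ii) The $\mathbf Q$-vector space with basis $\{I\}\cup\{A(T):T\in\mathcal R\}$ is a commutative $\mathbf Q$-algebra of symmetric, diagonalizable magic matrices. (In particular these families are linearly independent.)
   Context: A species of tree is a family $\mathcal R$ of subsets of $T_0$ containing $T_0$, each of cardinality $\ge 2$, any two of which are either disjoint or nested. For $T\subset T_0$ of cardinality $n(T)\ge2$, $A(T)=(\alpha_{i,j})$ is the $n\times n$ matrix with $\alpha_{i,j}=-1$ if $i\ne j$ and $\{i,j\}\subset T$, $\alpha_{i,i}=n(T)-1$ if $i\in T$, and $0$ otherwise. A matrix is magic if all its row and column sums are equal (its sum). $I$ is the identity. *)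

theory Defs
  imports "Jordan_Normal_Form.Matrix"
begin

text \<open>Ground set T0 = {0..<n} (0-based indices; the paper uses {1..n}).\<close>

definition species_of_tree :: "nat \<Rightarrow> nat set set \<Rightarrow> bool" where
  "species_of_tree n R \<longleftrightarrow>
     (\<forall>T\<in>R. T \<subseteq> {0..<n}) \<and> {0..<n} \<in> R \<and> (\<forall>T\<in>R. card T \<ge> 2) \<and>
     (\<forall>S\<in>R. \<forall>T\<in>R. S \<inter> T = {} \<or> S \<subseteq> T \<or> T \<subseteq> S)"

definition A_mat :: "nat \<Rightarrow> nat set \<Rightarrow> rat mat" where
  "A_mat n T = mat n n (\<lambda>(i,j).
      if i \<in> T \<and> j \<in> T then (if i = j then of_nat (card T) - 1 else -1) else 0)"

definition magic_with_sum :: "nat \<Rightarrow> rat mat \<Rightarrow> rat \<Rightarrow> bool" where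
  "magic_with_sum n M s \<longleftrightarrow> M \<in> carrier_mat n n \<and>
     (\<forall>i<n. (\<Sum>j<n. M $$ (i,j)) = s) \<and> (\<forall>j<n. (\<Sum>i<n. M $$ (i,j)) = s)"

definition magic :: "nat \<Rightarrow> rat mat \<Rightarrow> bool" where
  "magic n M \<longleftrightarrow> (\<exists>s. magic_with_sum n M s)"

definition symmetric_mat :: "rat mat \<Rightarrow> bool" where
  "symmetric_mat M \<longleftrightarrow> transpose_mat M = M"

definition diagonalizable :: "rat mat \<Rightarrow> bool" where
  "diagonalizable M \<longleftrightarrow> (\<exists>D. diagonal_mat D \<and> similar_mat M D)"

definition lincomb :: "nat \<Rightarrow> ('k \<Rightarrow> rat mat) \<Rightarrow> 'k set \<Rightarrow> ('k \<Rightarrow> rat) \<Rightarrow> rat mat" where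
  "lincomb n f K c = mat n n (\<lambda>(i,j). \<Sum>k\<in>K. c k * (f k $$ (i,j)))"

definition span_mat :: "nat \<Rightarrow> ('k \<Rightarrow> rat mat) \<Rightarrow> 'k set \<Rightarrow> rat mat set" where
  "span_mat n f K = {lincomb n f K c | c. True}"

definition lin_indep_mat :: "nat \<Rightarrow> ('k \<Rightarrow> rat mat) \<Rightarrow> 'k set \<Rightarrow> bool" where
  "lin_indep_mat n f K \<longleftrightarrow> (\<forall>c. lincomb n f K c = 0\<^sub>m n n \<longrightarrow> (\<forall>k\<in>K. c k = 0))"

definition comm_subalgebra :: "rat mat set \<Rightarrow> bool" where
  "comm_subalgebra V \<longleftrightarrow> (\<forall>M\<in>V. \<forall>N\<in>V. M * N \<in> V \<and> M * N = N * M)"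

definition I_or_A :: "nat \<Rightarrow> nat set option \<Rightarrow> rat mat" where
  "I_or_A n x = (case x of None \<Rightarrow> 1\<^sub>m n | Some T \<Rightarrow> A_mat n T)"

end

theory Submission
  imports Defs "Jordan_Normal_Form.Determinant"
begin

text \<open>
  For a vector \<open>v\<close>, the product \<open>A(T) v\<close> is \<open>|T| v\<^sub>i - \<Sum>\<^sub>j\<^sub>\<in>\<^sub>T v\<^sub>j\<close> at \<open>i \<in> T\<close> and \<open>0\<close> elsewhere.
  Hence \<open>A(T) A(S) = |S| A(T)\<close> if \<open>T \<subseteq> S\<close> and \<open>A(T) A(S) = 0\<close> if \<open>T \<inter> S = {}\<close>; as the
  species is laminar this gives closure under products and commutativity.

  The off-diagonal entry \<open>(i, j)\<close> of \<open>\<Sum> c\<^sub>T A(T)\<close> is \<open>-\<Sum> c\<^sub>U\<close> over the members \<open>U\<close>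
  containing \<open>i\<close> and \<open>j\<close>. Taking \<open>i, j\<close> in different children of \<open>T\<close>, these are exactly
  the members containing \<open>T\<close>, so a downward induction on \<open>T\<close> shows that all \<open>c\<^sub>T\<close> vanish.

  Symmetry does not give diagonalizability over \<open>\<rat>\<close>, so an explicit orthogonal basis
  of common eigenvectors is constructed. Besides the all-ones vector, for each \<open>0 < k < n\<close>
  let \<open>S\<close> be the smallest member containing \<open>k\<close> and some smaller index, \<open>C\<close> the child
  of \<open>S\<close> containing \<open>k\<close>, and \<open>L\<close> the union of the children of \<open>S\<close> meeting \<open>{0..<k}\<close>.
  The vector that is \<open>|C|\<close> on \<open>L\<close>, \<open>-|L|\<close> on \<open>C\<close> and \<open>0\<close> elsewhere has sum zero, vanishes
  outside \<open>S\<close> and is constant on every member strictly inside \<open>S\<close>; this makes it an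
  eigenvector of every \<open>A(T)\<close> and orthogonal to the vectors built from the other indices.
\<close>

subsection \<open>Diagonalization by an orthogonal eigenbasis\<close>

lemma orthogonal_columns_left_inverse:
  fixes v :: "nat \<Rightarrow> nat \<Rightarrow> 'a::field"
  assumes orth: "\<And>k l. k < n \<Longrightarrow> l < n \<Longrightarrow> k \<noteq> l \<Longrightarrow> (\<Sum>i<n. v k i * v l i) = 0"
    and nonzero: "\<And>k. k < n \<Longrightarrow> (\<Sum>i<n. v k i * v k i) \<noteq> 0"
  shows "mat n n (\<lambda>(k,i). v k i / (\<Sum>j<n. v k j * v k j)) * mat n n (\<lambda>(i,k). v k i) = 1\<^sub>m n"
proof (rule eq_matI)
  fix k l assume "k < dim_row (1\<^sub>m n :: 'a mat)" "l < dim_col (1\<^sub>m n :: 'a mat)"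
  then have k: "k < n" and l: "l < n" by auto
  have "(mat n n (\<lambda>(k,i). v k i / (\<Sum>j<n. v k j * v k j)) * mat n n (\<lambda>(i,k). v k i)) $$ (k,l) =
          (\<Sum>i<n. v k i * v l i) / (\<Sum>j<n. v k j * v k j)"
    using k l by (simp add: scalar_prod_def lessThan_atLeast0 sum_divide_distrib)
  also have "\<dots> = 1\<^sub>m n $$ (k,l)"
    using k l orth[of k l] nonzero[of k] by auto
  finally show "(mat n n (\<lambda>(k,i). v k i / (\<Sum>j<n. v k j * v k j)) * mat n n (\<lambda>(i,k). v k i)) $$ (k,l) =
      1\<^sub>m n $$ (k,l)" .
qed auto

lemma similar_diagonal_if_orthogonal_eigenvectors:
  fixes M :: "'a::field mat" and v :: "nat \<Rightarrow> nat \<Rightarrow> 'a" and lam :: "nat \<Rightarrow> 'a"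
  assumes M: "M \<in> carrier_mat n n"
    and orth: "\<And>k l. k < n \<Longrightarrow> l < n \<Longrightarrow> k \<noteq> l \<Longrightarrow> (\<Sum>i<n. v k i * v l i) = 0"
    and nonzero: "\<And>k. k < n \<Longrightarrow> (\<Sum>i<n. v k i * v k i) \<noteq> 0"
    and eigen: "\<And>k i. k < n \<Longrightarrow> i < n \<Longrightarrow> (\<Sum>j<n. M $$ (i,j) * v k j) = lam k * v k i"
  shows "\<exists>D. diagonal_mat D \<and> similar_mat M D"
proof -
  define P where "P = mat n n (\<lambda>(i,k). v k i)"
  define Q where "Q = mat n n (\<lambda>(k,i). v k i / (\<Sum>j<n. v k j * v k j))"
  define D where "D = mat n n (\<lambda>(k,l). if k = l then lam k else 0)"
  have P: "P \<in> carrier_mat n n" and Q: "Q \<in> carrier_mat n n" and D: "D \<in> carrier_mat n n"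
    by (auto simp: P_def Q_def D_def)
  have QP: "Q * P = 1\<^sub>m n"
    unfolding P_def Q_def by (rule orthogonal_columns_left_inverse[OF orth nonzero])
  have PQ: "P * Q = 1\<^sub>m n" by (rule mat_mult_left_right_inverse[OF Q P QP])
  have MP: "M * P = P * D"
  proof (rule eq_matI)
    fix i k assume "i < dim_row (P * D)" "k < dim_col (P * D)"
    hence i: "i < n" and k: "k < n" using P D by auto
    have "(M * P) $$ (i,k) = (\<Sum>j<n. M $$ (i,j) * v k j)"
      using i k M by (simp add: P_def scalar_prod_def lessThan_atLeast0)
    also have "\<dots> = lam k * v k i" using eigen i k by simp
    also have "\<dots> = (\<Sum>l<n. v l i * (if l = k then lam l else 0))"
      using k by (simp add: if_distrib[where f="\<lambda>x. _ * x"] sum.delta cong: if_cong)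
    also have "\<dots> = (P * D) $$ (i,k)"
      using i k by (simp add: P_def D_def scalar_prod_def lessThan_atLeast0)
    finally show "(M * P) $$ (i,k) = (P * D) $$ (i,k)" .
  qed (use M P D in auto)
  have "M = M * (P * Q)" using M by (simp add: PQ)
  also have "\<dots> = M * P * Q" using M P Q by (simp add: assoc_mult_mat)
  also have "\<dots> = P * D * Q" by (simp add: MP)
  finally have "similar_mat M D" using similar_matI[of M D P Q n] M P Q D PQ QP by auto
  moreover have "diagonal_mat D" by (auto simp: diagonal_mat_def D_def)
  ultimately show ?thesis by blast
qed

lemma sum_mult_eq_zero_if_constant_on_support:
  fixes a b :: "nat \<Rightarrow> 'a::comm_ring"
  assumes "(\<Sum>j<n. a j) = 0" and "\<And>j. j < n \<Longrightarrow> a j \<noteq> 0 \<Longrightarrow> b j = c"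
  shows "(\<Sum>j<n. a j * b j) = 0"
proof -
  have "a j * b j = a j * c" if "j < n" for j
    using assms(2)[OF that] by (cases "a j = 0") auto
  then have "(\<Sum>j<n. a j * b j) = (\<Sum>j<n. a j * c)" by simp
  also have "\<dots> = 0" using assms(1) by (simp add: sum_distrib_right[symmetric])
  finally show ?thesis .
qed

lemma lincomb_carrier [simp]: "lincomb n f K c \<in> carrier_mat n n"
  by (simp add: lincomb_def)

lemma dim_lincomb [simp]: "dim_row (lincomb n f K c) = n" "dim_col (lincomb n f K c) = n"
  by (simp_all add: lincomb_def)

lemma index_lincomb [simp]:
  "i < n \<Longrightarrow> j < n \<Longrightarrow> lincomb n f K c $$ (i,j) = (\<Sum>k\<in>K. c k * f k $$ (i,j))"
  by (simp add: lincomb_def)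

lemma symmetric_lincomb:
  assumes "\<And>k i j. k \<in> K \<Longrightarrow> i < n \<Longrightarrow> j < n \<Longrightarrow> f k $$ (i,j) = f k $$ (j,i)"
  shows "symmetric_mat (lincomb n f K c)"
  unfolding symmetric_mat_def by (rule eq_matI) (auto simp: assms intro!: sum.cong)

lemma magic_lincomb:
  assumes "\<And>k. k \<in> K \<Longrightarrow> magic_with_sum n (f k) (s k)"
  shows "magic_with_sum n (lincomb n f K c) (\<Sum>k\<in>K. c k * s k)"
proof -
  have row: "(\<Sum>j<n. lincomb n f K c $$ (i,j)) = (\<Sum>k\<in>K. c k * s k)" if "i < n" for i
  proof -
    have "(\<Sum>j<n. lincomb n f K c $$ (i,j)) = (\<Sum>k\<in>K. c k * (\<Sum>j<n. f k $$ (i,j)))"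
      using that by (simp add: sum_distrib_left) (rule sum.swap)
    also have "\<dots> = (\<Sum>k\<in>K. c k * s k)"
      using assms that unfolding magic_with_sum_def by (intro sum.cong) auto
    finally show ?thesis .
  qed
  have col: "(\<Sum>i<n. lincomb n f K c $$ (i,j)) = (\<Sum>k\<in>K. c k * s k)" if "j < n" for j
  proof -
    have "(\<Sum>i<n. lincomb n f K c $$ (i,j)) = (\<Sum>k\<in>K. c k * (\<Sum>i<n. f k $$ (i,j)))"
      using that by (simp add: sum_distrib_left) (rule sum.swap)
    also have "\<dots> = (\<Sum>k\<in>K. c k * s k)"
      using assms that unfolding magic_with_sum_def by (intro sum.cong) auto
    finally show ?thesis .
  qed
  show ?thesis unfolding magic_with_sum_def using row col by simp
qed

lemma lincomb_common_eigenvector: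
  assumes "\<And>k i. k \<in> K \<Longrightarrow> i < n \<Longrightarrow> (\<Sum>j<n. f k $$ (i,j) * v j) = mu k * v i"
    and i: "i < n"
  shows "(\<Sum>j<n. lincomb n f K c $$ (i,j) * v j) = (\<Sum>k\<in>K. c k * mu k) * v i"
proof -
  have "(\<Sum>j<n. lincomb n f K c $$ (i,j) * v j) = (\<Sum>k\<in>K. c k * (\<Sum>j<n. f k $$ (i,j) * v j))"
    using i by (simp add: sum_distrib_right sum_distrib_left mult.assoc) (rule sum.swap)
  also have "\<dots> = (\<Sum>k\<in>K. c k * mu k * v i)"
    using assms i by (intro sum.cong) auto
  finally show ?thesis by (simp add: sum_distrib_right)
qed

lemma diagonalizable_lincomb_if_common_orthogonal_eigenbasis:
  assumes orth: "\<And>k l. k < n \<Longrightarrow> l < n \<Longrightarrow> k \<noteq> l \<Longrightarrow> (\<Sum>i<n. v k i * v l i) = 0"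
    and nonzero: "\<And>k. k < n \<Longrightarrow> (\<Sum>i<n. v k i * v k i) \<noteq> 0"
    and eigen: "\<And>x k. x \<in> K \<Longrightarrow> k < n \<Longrightarrow>
                  \<exists>mu. \<forall>i<n. (\<Sum>j<n. f x $$ (i,j) * v k j) = mu * v k i"
  shows "diagonalizable (lincomb n f K c)"
proof -
  define mu where "mu k x = (SOME m. \<forall>i<n. (\<Sum>j<n. f x $$ (i,j) * v k j) = m * v k i)" for k x
  have mu: "(\<Sum>j<n. f x $$ (i,j) * v k j) = mu k x * v k i" if "x \<in> K" "k < n" "i < n" for x k i
    using someI_ex[OF eigen[OF that(1,2)]] that(3) unfolding mu_def by blast
  have "\<exists>D. diagonal_mat D \<and> similar_mat (lincomb n f K c) D"
  proof (rule similar_diagonal_if_orthogonal_eigenvectors[OF _ orth nonzero])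
    fix k i assume "k < n" "i < n"
    then show "(\<Sum>j<n. lincomb n f K c $$ (i,j) * v k j) = (\<Sum>x\<in>K. c x * mu k x) * v k i"
      using mu by (intro lincomb_common_eigenvector) auto
  qed auto
  then show ?thesis unfolding diagonalizable_def .
qed

lemma lincomb_mult:
  assumes prod: "\<And>x y i j. x \<in> K \<Longrightarrow> y \<in> K \<Longrightarrow> i < n \<Longrightarrow> j < n \<Longrightarrow>
                   (\<Sum>l<n. f x $$ (i,l) * f y $$ (l,j)) = (\<Sum>z\<in>K. g x y z * f z $$ (i,j))"
  shows "lincomb n f K c * lincomb n f K d =
           lincomb n f K (\<lambda>z. \<Sum>x\<in>K. \<Sum>y\<in>K. c x * d y * g x y z)"
proof (rule eq_matI)
  fix i j
  assume "i < dim_row (lincomb n f K (\<lambda>z. \<Sum>x\<in>K. \<Sum>y\<in>K. c x * d y * g x y z))"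
    "j < dim_col (lincomb n f K (\<lambda>z. \<Sum>x\<in>K. \<Sum>y\<in>K. c x * d y * g x y z))"
  hence i: "i < n" and j: "j < n" by auto
  have "(lincomb n f K c * lincomb n f K d) $$ (i,j) =
          (\<Sum>l<n. (\<Sum>x\<in>K. c x * f x $$ (i,l)) * (\<Sum>y\<in>K. d y * f y $$ (l,j)))"
    using i j by (simp add: scalar_prod_def lessThan_atLeast0)
  also have "\<dots> = (\<Sum>l<n. \<Sum>x\<in>K. \<Sum>y\<in>K. c x * d y * (f x $$ (i,l) * f y $$ (l,j)))"
    by (simp add: sum_product mult_ac)
  also have "\<dots> = (\<Sum>x\<in>K. \<Sum>y\<in>K. c x * d y * (\<Sum>l<n. f x $$ (i,l) * f y $$ (l,j)))"
    by (simp add: sum_distrib_left)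
      (subst sum.swap, simp add: sum_distrib_left mult_ac, subst sum.swap, simp)
  also have "\<dots> = (\<Sum>x\<in>K. \<Sum>y\<in>K. \<Sum>z\<in>K. c x * d y * g x y z * f z $$ (i,j))"
    using prod i j by (intro sum.cong refl) (simp add: sum_distrib_left mult_ac)
  also have "\<dots> = (\<Sum>z\<in>K. (\<Sum>x\<in>K. \<Sum>y\<in>K. c x * d y * g x y z) * f z $$ (i,j))"
    by (simp add: sum_distrib_right) (subst sum.swap, rule sum.cong[OF refl], rule sum.swap)
  finally show "(lincomb n f K c * lincomb n f K d) $$ (i,j) =
      lincomb n f K (\<lambda>z. \<Sum>x\<in>K. \<Sum>y\<in>K. c x * d y * g x y z) $$ (i,j)"
    using i j by simp
qed auto

lemma comm_subalgebra_span_mat: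
  assumes prod: "\<And>x y i j. x \<in> K \<Longrightarrow> y \<in> K \<Longrightarrow> i < n \<Longrightarrow> j < n \<Longrightarrow>
                   (\<Sum>l<n. f x $$ (i,l) * f y $$ (l,j)) = (\<Sum>z\<in>K. g x y z * f z $$ (i,j))"
    and g_commute: "\<And>x y z. x \<in> K \<Longrightarrow> y \<in> K \<Longrightarrow> g x y z = g y x z"
  shows "comm_subalgebra (span_mat n f K)"
  unfolding comm_subalgebra_def span_mat_def
proof (intro ballI)
  fix M N assume "M \<in> {lincomb n f K c |c. True}" "N \<in> {lincomb n f K c |c. True}"
  then obtain c d where M: "M = lincomb n f K c" and N: "N = lincomb n f K d" by auto
  have "(\<lambda>z. \<Sum>x\<in>K. \<Sum>y\<in>K. d x * c y * g x y z) = (\<lambda>z. \<Sum>x\<in>K. \<Sum>y\<in>K. c x * d y * g x y z)"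
    by (subst sum.swap) (use g_commute in \<open>auto simp: mult_ac intro!: sum.cong\<close>)
  moreover have "M * N = lincomb n f K (\<lambda>z. \<Sum>x\<in>K. \<Sum>y\<in>K. c x * d y * g x y z)"
    and "N * M = lincomb n f K (\<lambda>z. \<Sum>x\<in>K. \<Sum>y\<in>K. d x * c y * g x y z)"
    unfolding M N by (rule lincomb_mult[OF prod], assumption+)+
  ultimately show "M * N \<in> {lincomb n f K c |c. True} \<and> M * N = N * M" by auto
qed

lemma index_A_mat [simp]:
  "i < n \<Longrightarrow> j < n \<Longrightarrow> A_mat n T $$ (i,j) =
     (if i \<in> T \<and> j \<in> T then (if i = j then of_nat (card T) - 1 else -1) else 0)"
  by (simp add: A_mat_def)

lemma A_mat_carrier [simp]: "A_mat n T \<in> carrier_mat n n"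
  by (simp add: A_mat_def)

lemma A_mat_symmetric: "i < n \<Longrightarrow> j < n \<Longrightarrow> A_mat n T $$ (i,j) = A_mat n T $$ (j,i)"
  by auto

lemma A_mat_apply:
  assumes T: "T \<subseteq> {..<n}" and i: "i < n"
  shows "(\<Sum>j<n. A_mat n T $$ (i,j) * v j) =
           (if i \<in> T then of_nat (card T) * v i - (\<Sum>j\<in>T. v j) else 0)"
proof (cases "i \<in> T")
  case True
  have "(\<Sum>j<n. A_mat n T $$ (i,j) * v j) =
          (\<Sum>j<n. if j \<in> T then (if i = j then of_nat (card T) * v j else 0) - v j else 0)"
    using i True by (intro sum.cong) (auto simp: algebra_simps)
  also have "\<dots> = (\<Sum>j\<in>T. (if i = j then of_nat (card T) * v j else 0) - v j)"
    using T by (simp add: sum.inter_restrict[symmetric] Int_absorb1)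
  also have "\<dots> = of_nat (card T) * v i - (\<Sum>j\<in>T. v j)"
    using True finite_subset[OF T] by (simp add: sum_subtractf)
  finally show ?thesis using True by simp
qed (use i in simp)

lemma A_mat_magic: assumes "T \<subseteq> {..<n}" shows "magic_with_sum n (A_mat n T) 0"
proof -
  have row: "(\<Sum>j<n. A_mat n T $$ (i,j)) = 0" if "i < n" for i
    using A_mat_apply[OF assms that, of "\<lambda>_. 1"] finite_subset[OF assms] by simp
  have "(\<Sum>i<n. A_mat n T $$ (i,j)) = 0" if "j < n" for j
  proof -
    have "(\<Sum>i<n. A_mat n T $$ (i,j)) = (\<Sum>i<n. A_mat n T $$ (j,i))"
      using that by (intro sum.cong) auto
    then show ?thesis using row[OF that] by simp
  qed
  with row show ?thesis unfolding magic_with_sum_def by simp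
qed

lemma sum_A_mat_column:
  assumes T: "T \<subseteq> {..<n}" and j: "j < n"
  shows "(\<Sum>l\<in>T. A_mat n S $$ (l,j)) =
           (if j \<in> S then (if j \<in> T then of_nat (card S) else 0) - of_nat (card (T \<inter> S)) else 0)"
proof (cases "j \<in> S")
  case True
  have "(\<Sum>l\<in>T. A_mat n S $$ (l,j)) = (\<Sum>l\<in>T. if l \<in> S then (if l = j then of_nat (card S) else 0) - 1 else 0)"
    using T j True by (intro sum.cong) auto
  also have "\<dots> = (\<Sum>l\<in>T \<inter> S. (if l = j then of_nat (card S) else 0) - 1)"
    using finite_subset[OF T] by (simp add: sum.inter_restrict)
  also have "\<dots> = (if j \<in> T then of_nat (card S) else 0) - of_nat (card (T \<inter> S))"
    using True finite_subset[OF T] by (simp add: sum_subtractf)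
  finally show ?thesis using True by simp
qed (use T j in \<open>auto intro!: sum.neutral\<close>)

lemma A_mat_mult_laminar:
  assumes T: "T \<subseteq> {..<n}" and S: "S \<subseteq> {..<n}" and i: "i < n" and j: "j < n"
    and laminar: "T \<inter> S = {} \<or> T \<subseteq> S \<or> S \<subseteq> T"
  shows "(\<Sum>l<n. A_mat n T $$ (i,l) * A_mat n S $$ (l,j)) =
           (if T \<subseteq> S then of_nat (card S) * A_mat n T $$ (i,j)
            else if S \<subseteq> T then of_nat (card T) * A_mat n S $$ (i,j) else 0)"
proof -
  have "(\<Sum>l<n. A_mat n T $$ (i,l) * A_mat n S $$ (l,j)) =
          (if i \<in> T then of_nat (card T) * A_mat n S $$ (i,j) -
             (if j \<in> S then (if j \<in> T then of_nat (card S) else 0) - of_nat (card (T \<inter> S)) else 0)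
           else 0)"
    by (simp add: A_mat_apply[OF T i] sum_A_mat_column[OF T j])
  also have "\<dots> = (if T \<subseteq> S then of_nat (card S) * A_mat n T $$ (i,j)
                   else if S \<subseteq> T then of_nat (card T) * A_mat n S $$ (i,j) else 0)"
  proof -
    consider "T \<subseteq> S" | "\<not> T \<subseteq> S" "S \<subseteq> T" | "\<not> T \<subseteq> S" "\<not> S \<subseteq> T" "T \<inter> S = {}"
      using laminar by blast
    then show ?thesis
    proof cases
      case 1
      then have "T \<inter> S = T" by auto
      with 1 i j show ?thesis by (auto simp: algebra_simps)
    next
      case 2
      then have "T \<inter> S = S" by auto
      with 2 i j show ?thesis by (auto simp: algebra_simps)
    qed (use i j in auto)
  qed
  finally show ?thesis .
qed

lemma A_mat_apply_constant:
  assumes T: "T \<subseteq> {..<n}" and i: "i < n" and const: "\<And>j. j \<in> T \<Longrightarrow> v j = c"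
  shows "(\<Sum>j<n. A_mat n T $$ (i,j) * v j) = 0"
  using A_mat_apply[OF T i] const by simp

lemma A_mat_apply_supported:
  assumes T: "T \<subseteq> {..<n}" and i: "i < n"
    and support: "\<And>j. j \<notin> T \<Longrightarrow> v j = 0" and sum_zero: "(\<Sum>j<n. v j) = 0"
  shows "(\<Sum>j<n. A_mat n T $$ (i,j) * v j) = of_nat (card T) * v i"
proof -
  have "(\<Sum>j\<in>T. v j) = (\<Sum>j<n. v j)"
    using support T by (intro sum.mono_neutral_left) auto
  then show ?thesis using A_mat_apply[OF T i] sum_zero support by simp
qed

text \<open>Structure constants of the products \<open>A(T) A(S)\<close> for nested or disjoint \<open>T\<close>, \<open>S\<close>.\<close>
definition A_coeff :: "nat set \<Rightarrow> nat set \<Rightarrow> nat set \<Rightarrow> rat" where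
  "A_coeff T S U = (if T \<subseteq> S \<and> U = T then of_nat (card S)
                    else if S \<subseteq> T \<and> U = S then of_nat (card T) else 0)"

lemma A_coeff_commute: "A_coeff T S U = A_coeff S T U"
  unfolding A_coeff_def by auto

subsection \<open>Species of trees\<close>

locale species =
  fixes n :: nat and R :: "nat set set"
  assumes species: "species_of_tree n R"
begin

lemma member_subset: "T \<in> R \<Longrightarrow> T \<subseteq> {..<n}"
  using species by (force simp: species_of_tree_def)

lemma ground_set_member: "{..<n} \<in> R"
  using species by (simp add: species_of_tree_def lessThan_atLeast0)

lemma card_member: "T \<in> R \<Longrightarrow> 2 \<le> card T"
  using species by (simp add: species_of_tree_def)

lemma laminar: "S \<in> R \<Longrightarrow> T \<in> R \<Longrightarrow> S \<inter> T = {} \<or> S \<subseteq> T \<or> T \<subseteq> S"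
  using species by (simp add: species_of_tree_def)

lemma nested_if_common_element: "S \<in> R \<Longrightarrow> T \<in> R \<Longrightarrow> x \<in> S \<Longrightarrow> x \<in> T \<Longrightarrow> S \<subseteq> T \<or> T \<subseteq> S"
  using laminar by blast

lemma finite_member: "T \<in> R \<Longrightarrow> finite T"
  using member_subset finite_subset by blast

lemma finite_species: "finite R"
  using member_subset by (intro finite_subset[of R "Pow {..<n}"]) auto

lemma two_le_n: "2 \<le> n"
  using card_member[OF ground_set_member] by simp

text \<open>
  The child of \<open>S\<close> containing \<open>j\<close>: the largest member strictly inside \<open>S\<close> that
  contains \<open>j\<close>, or \<open>{j}\<close> if there is none.
\<close>
definition child :: "nat set \<Rightarrow> nat \<Rightarrow> nat set" where
  "child S j = \<Union>{U\<in>R. j \<in> U \<and> U \<subset> S} \<union> {j}"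

lemma child_cases:
  assumes "S \<in> R"
  shows "child S j = {j} \<or> (child S j \<in> R \<and> child S j \<subset> S)"
proof (cases "{U\<in>R. j \<in> U \<and> U \<subset> S} = {}")
  case False
  let ?F = "{U\<in>R. j \<in> U \<and> U \<subset> S}"
  have "finite ?F" using finite_species by simp
  then obtain m where m: "m \<in> ?F" and maximal: "\<forall>b\<in>?F. m \<le> b \<longrightarrow> m = b"
    using finite_has_maximal[OF _ False] by blast
  have "b \<subseteq> m" if b: "b \<in> ?F" for b
  proof -
    have "b \<subseteq> m \<or> m \<subseteq> b" using nested_if_common_element[of b m j] b m by simp
    then show ?thesis using maximal b by blast
  qed
  then have "\<Union>?F = m" using Union_upper[OF m] by blast
  then have "child S j = m" using m unfolding child_def by auto
  with m show ?thesis by simp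
next
  case True
  then show ?thesis unfolding child_def True by simp
qed

lemma mem_child: "j \<in> child S j"
  by (simp add: child_def)

lemma child_psubset: "S \<in> R \<Longrightarrow> j \<in> S \<Longrightarrow> child S j \<subset> S"
  using child_cases[of S j] card_member[of S] by force

lemma subset_child: "U \<in> R \<Longrightarrow> j \<in> U \<Longrightarrow> U \<subset> S \<Longrightarrow> U \<subseteq> child S j"
  by (auto simp: child_def)

lemma child_eq_if_mem:
  assumes S: "S \<in> R" and j': "j' \<in> child S j"
  shows "child S j' = child S j"
proof (cases "child S j = {j}")
  case False
  then have C: "child S j \<in> R" "child S j \<subset> S" using child_cases[OF S, of j] by auto
  have "child S j \<subseteq> child S j'" by (rule subset_child[OF C(1) j' C(2)])
  moreover have "child S j' \<subseteq> child S j"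
  proof (cases "child S j' = {j'}")
    case False
    then have "child S j' \<in> R" "child S j' \<subset> S" using child_cases[OF S, of j'] by auto
    moreover have "j \<in> child S j'" using \<open>child S j \<subseteq> child S j'\<close> mem_child[of j S] by auto
    ultimately show ?thesis using subset_child by blast
  qed (use j' in simp)
  ultimately show ?thesis by auto
qed (use j' in simp)

lemma child_constant_on_inner_member:
  assumes S: "S \<in> R" and T: "T \<in> R" "T \<subset> S" and "j \<in> T" "j' \<in> T"
  shows "child S j' = child S j"
  using child_eq_if_mem[OF S] subset_child[OF T(1) _ T(2)] assms(4,5) by blast

lemma separating_pair:
  assumes T: "T \<in> R"
  obtains i j where "i \<in> T" "j \<in> T" "i \<noteq> j" "\<And>U. U \<in> R \<Longrightarrow> i \<in> U \<and> j \<in> U \<longleftrightarrow> T \<subseteq> U"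
proof -
  obtain i where i: "i \<in> T" using card_member[OF T] by fastforce
  obtain j where j: "j \<in> T" "j \<notin> child T i" using child_psubset[OF T i] by blast
  have "T \<subseteq> U" if U: "U \<in> R" and "i \<in> U" "j \<in> U" for U
  proof -
    have "\<not> U \<subset> T" using subset_child[OF U \<open>i \<in> U\<close>] \<open>j \<in> U\<close> j by blast
    then show ?thesis using nested_if_common_element[OF U T \<open>i \<in> U\<close> i] by blast
  qed
  moreover have "i \<noteq> j" using j mem_child[of i T] by auto
  ultimately show ?thesis using that i j by blast
qed


lemma sum_coeffs_above_eq_zero:
  assumes offdiag: "\<And>i j. i < n \<Longrightarrow> j < n \<Longrightarrow> i \<noteq> j \<Longrightarrow> (\<Sum>T\<in>R. c T * A_mat n T $$ (i,j)) = 0"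
    and T: "T \<in> R"
  shows "(\<Sum>U | U \<in> R \<and> T \<subseteq> U. c U) = 0"
proof -
  obtain i j where ij: "i \<in> T" "j \<in> T" "i \<noteq> j"
    and separating: "\<And>U. U \<in> R \<Longrightarrow> i \<in> U \<and> j \<in> U \<longleftrightarrow> T \<subseteq> U"
    using separating_pair[OF T] by blast
  have i: "i < n" and j: "j < n" using ij member_subset[OF T] by auto
  have "0 = (\<Sum>U\<in>R. c U * A_mat n U $$ (i,j))" using offdiag[OF i j ij(3)] by simp
  also have "\<dots> = (\<Sum>U\<in>R. if T \<subseteq> U then - c U else 0)"
    using i j ij(3) separating by (intro sum.cong) auto
  also have "\<dots> = - (\<Sum>U | U \<in> R \<and> T \<subseteq> U. c U)"
    using finite_species by (simp add: sum.inter_filter sum_negf[symmetric] if_distrib[of uminus] cong: if_cong)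
  finally show ?thesis by simp
qed

lemma coeffs_zero_if_offdiag_zero:
  assumes offdiag: "\<And>i j. i < n \<Longrightarrow> j < n \<Longrightarrow> i \<noteq> j \<Longrightarrow> (\<Sum>T\<in>R. c T * A_mat n T $$ (i,j)) = 0"
  shows "T \<in> R \<Longrightarrow> c T = 0"
proof (induction "n - card T" arbitrary: T rule: less_induct)
  case less
  have "(\<Sum>U\<in>{U\<in>R. T \<subseteq> U} - {T}. c U) = 0"
  proof (rule sum.neutral, rule ballI)
    fix U assume "U \<in> {U\<in>R. T \<subseteq> U} - {T}"
    then have U: "U \<in> R" and "T \<subset> U" by auto
    then have "card T < card U" using psubset_card_mono[OF finite_member] by blast
    moreover have "card U \<le> n" using card_mono[OF _ member_subset[OF U]] by simp
    ultimately show "c U = 0" using less.hyps U by simp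
  qed
  moreover have "(\<Sum>U\<in>{U\<in>R. T \<subseteq> U}. c U) = c T + (\<Sum>U\<in>{U\<in>R. T \<subseteq> U} - {T}. c U)"
    using finite_species less.prems by (intro sum.remove) auto
  ultimately show ?case using sum_coeffs_above_eq_zero[OF offdiag less.prems] by simp
qed

lemma A_mat_mult_eq_sum_A_coeff:
  assumes T: "T \<in> R" and S: "S \<in> R" and i: "i < n" and j: "j < n"
  shows "(\<Sum>l<n. A_mat n T $$ (i,l) * A_mat n S $$ (l,j)) = (\<Sum>U\<in>R. A_coeff T S U * A_mat n U $$ (i,j))"
proof -
  have "(\<Sum>U\<in>R. A_coeff T S U * A_mat n U $$ (i,j)) =
          (\<Sum>U\<in>R. if T \<subseteq> S then (if U = T then of_nat (card S) * A_mat n T $$ (i,j) else 0)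
                   else if S \<subseteq> T then (if U = S then of_nat (card T) * A_mat n S $$ (i,j) else 0)
                   else 0)"
    by (intro sum.cong) (auto simp: A_coeff_def)
  also have "\<dots> = (if T \<subseteq> S then of_nat (card S) * A_mat n T $$ (i,j)
                   else if S \<subseteq> T then of_nat (card T) * A_mat n S $$ (i,j) else 0)"
    using T S finite_species by (simp add: if_distrib[of "\<lambda>f. sum f R"] cong: if_cong)
  finally show ?thesis
    using A_mat_mult_laminar[OF member_subset[OF T] member_subset[OF S] i j laminar[OF T S]] by simp
qed

subsection \<open>A common orthogonal eigenbasis\<close>

definition meets_below :: "nat \<Rightarrow> nat set \<Rightarrow> bool" where
  "meets_below k X \<longleftrightarrow> (\<exists>j\<in>X. j < k)"

text \<open>
  Such a minimal member exists for \<open>0 < k < n\<close> since \<open>{..<n}\<close> qualifies; for \<open>k = 0\<close>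
  the choice is arbitrary and unused.
\<close>
definition pivot :: "nat \<Rightarrow> nat set" where
  "pivot k = (SOME S. S \<in> R \<and> k \<in> S \<and> meets_below k S \<and>
                (\<forall>T\<in>R. k \<in> T \<and> meets_below k T \<and> T \<subseteq> S \<longrightarrow> T = S))"

definition pivot_child :: "nat \<Rightarrow> nat set" where
  "pivot_child k = child (pivot k) k"

definition lower_part :: "nat \<Rightarrow> nat set" where
  "lower_part k = {j \<in> pivot k. meets_below k (child (pivot k) j)}"

definition eigvec :: "nat \<Rightarrow> nat \<Rightarrow> rat" where
  "eigvec k j = (if k = 0 then 1
                 else if j \<in> lower_part k then of_nat (card (pivot_child k))
                 else if j \<in> pivot_child k then - of_nat (card (lower_part k)) else 0)"

context
  fixes k assumes k: "0 < k" "k < n"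
begin

lemma pivot:
  "pivot k \<in> R" "k \<in> pivot k" "meets_below k (pivot k)"
  "\<And>T. T \<in> R \<Longrightarrow> k \<in> T \<Longrightarrow> meets_below k T \<Longrightarrow> T \<subseteq> pivot k \<Longrightarrow> T = pivot k"
proof -
  let ?G = "{T\<in>R. k \<in> T \<and> meets_below k T}"
  have "{..<n} \<in> ?G" using ground_set_member k by (auto simp: meets_below_def)
  moreover have "finite ?G" using finite_species by simp
  ultimately obtain m where "m \<in> ?G" "\<forall>T\<in>?G. T \<le> m \<longrightarrow> m = T"
    using finite_has_minimal[of ?G] by blast
  then have "\<exists>S. S \<in> R \<and> k \<in> S \<and> meets_below k S \<and>
               (\<forall>T\<in>R. k \<in> T \<and> meets_below k T \<and> T \<subseteq> S \<longrightarrow> T = S)" by blast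
  from someI_ex[OF this] show
    "pivot k \<in> R" "k \<in> pivot k" "meets_below k (pivot k)"
    "\<And>T. T \<in> R \<Longrightarrow> k \<in> T \<Longrightarrow> meets_below k T \<Longrightarrow> T \<subseteq> pivot k \<Longrightarrow> T = pivot k"
    unfolding pivot_def[symmetric] by blast+
qed

lemma not_meets_below_pivot_child: "\<not> meets_below k (pivot_child k)"
proof
  assume below: "meets_below k (pivot_child k)"
  then have "pivot_child k \<noteq> {k}" by (auto simp: meets_below_def)
  then have C: "pivot_child k \<in> R" "pivot_child k \<subset> pivot k"
    using child_cases[OF pivot(1), of k] by (auto simp: pivot_child_def)
  have "k \<in> pivot_child k" unfolding pivot_child_def by (rule mem_child)
  with pivot(4)[OF C(1) _ below] C(2) show False by blast
qed

lemma pivot_child_subset: "pivot_child k \<subseteq> pivot k"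
  using child_psubset[OF pivot(1,2)] by (auto simp: pivot_child_def)

lemma mem_pivot_child_iff: "j \<in> pivot k \<Longrightarrow> j \<in> pivot_child k \<longleftrightarrow> child (pivot k) j = pivot_child k"
  using child_eq_if_mem[OF pivot(1), of j k] child_eq_if_mem[OF pivot(1), of k j] mem_child[of j]
  by (auto simp: pivot_child_def)

lemma lower_part_pivot_child_disjoint: "lower_part k \<inter> pivot_child k = {}"
  using mem_pivot_child_iff not_meets_below_pivot_child by (auto simp: lower_part_def)

lemma lower_part_nonempty: "lower_part k \<noteq> {}"
  using pivot(3) mem_child by (force simp: lower_part_def meets_below_def)

lemma finite_lower_part: "finite (lower_part k)"
  using finite_member[OF pivot(1)] by (simp add: lower_part_def)

lemma eigvec_outside_pivot: "j \<notin> pivot k \<Longrightarrow> eigvec k j = 0"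
  using k pivot_child_subset by (auto simp: eigvec_def lower_part_def)

lemma eigvec_in_pivot:
  "j \<in> pivot k \<Longrightarrow> eigvec k j =
     (if meets_below k (child (pivot k) j) then of_nat (card (pivot_child k))
      else if child (pivot k) j = pivot_child k then - of_nat (card (lower_part k)) else 0)"
  using k mem_pivot_child_iff by (simp add: eigvec_def lower_part_def)

lemma eigvec_support: "eigvec k j \<noteq> 0 \<Longrightarrow> j \<in> lower_part k \<or> j \<in> pivot_child k"
  using k by (auto simp: eigvec_def split: if_splits)

lemma sum_eigvec: "(\<Sum>j<n. eigvec k j) = 0"
proof -
  have L: "lower_part k \<subseteq> {..<n}" and C: "pivot_child k \<subseteq> {..<n}"
    using member_subset[OF pivot(1)] pivot_child_subset by (auto simp: lower_part_def)
  have "(\<Sum>j<n. eigvec k j) =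
          (\<Sum>j<n. (if j \<in> lower_part k then of_nat (card (pivot_child k)) else 0)
                 + (if j \<in> pivot_child k then - of_nat (card (lower_part k)) else 0))"
    using k lower_part_pivot_child_disjoint by (intro sum.cong) (auto simp: eigvec_def)
  also have "\<dots> = 0"
    using L C by (simp add: sum.distrib sum.inter_restrict[symmetric] Int_absorb1)
  finally show ?thesis .
qed

lemma eigvec_diagonal_nonzero: "eigvec k k \<noteq> 0"
proof -
  have "k \<in> pivot_child k" unfolding pivot_child_def by (rule mem_child)
  moreover have "card (lower_part k) \<noteq> 0" using lower_part_nonempty finite_lower_part by simp
  ultimately show ?thesis using k lower_part_pivot_child_disjoint by (auto simp: eigvec_def)
qed

lemma eigvec_constant_on_inner_member:
  assumes T: "T \<in> R" "T \<subset> pivot k"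
  obtains c where "\<And>j. j \<in> T \<Longrightarrow> eigvec k j = c"
proof (cases "T = {}")
  case False
  then obtain j0 where j0: "j0 \<in> T" by blast
  have "eigvec k j = eigvec k j0" if "j \<in> T" for j
  proof -
    have "j \<in> pivot k" "j0 \<in> pivot k" using T that j0 by auto
    then show ?thesis
      using child_constant_on_inner_member[OF pivot(1) T j0 that] by (simp add: eigvec_in_pivot)
  qed
  then show ?thesis using that by blast
qed simp

end

lemma eigvec_zero: "eigvec 0 j = 1"
  by (simp add: eigvec_def)

lemma eigvec_eigenvector_A_mat:
  assumes T: "T \<in> R" and k: "k < n"
  shows "\<exists>mu. \<forall>i<n. (\<Sum>j<n. A_mat n T $$ (i,j) * eigvec k j) = mu * eigvec k i"
proof -
  have T': "T \<subseteq> {..<n}" using member_subset[OF T] .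
  consider c where "\<And>j. j \<in> T \<Longrightarrow> eigvec k j = c"
    | "\<And>j. j \<notin> T \<Longrightarrow> eigvec k j = 0" "(\<Sum>j<n. eigvec k j) = 0"
  proof (cases "k = 0")
    case False
    then have k': "0 < k" "k < n" using k by auto
    consider "T \<inter> pivot k = {}" | "T \<subset> pivot k" | "pivot k \<subseteq> T"
      using laminar[OF T pivot(1)[OF k']] by blast
    then show ?thesis
    proof cases
      case 1
      then show ?thesis using that(1) eigvec_outside_pivot[OF k'] by blast
    next
      case 2
      then show ?thesis using that(1) eigvec_constant_on_inner_member[OF k' T] by blast
    next
      case 3
      then show ?thesis using that(2) eigvec_outside_pivot[OF k'] sum_eigvec[OF k'] by blast
    qed
  qed (use eigvec_zero in blast)
  then show ?thesis
  proof cases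
    case 1
    then have "\<forall>i<n. (\<Sum>j<n. A_mat n T $$ (i,j) * eigvec k j) = 0 * eigvec k i"
      using A_mat_apply_constant[OF T'] by simp
    then show ?thesis by blast
  next
    case 2
    then show ?thesis using A_mat_apply_supported[OF T'] by blast
  qed
qed

lemma eigvec_same_pivot:
  assumes kl: "0 < k" "k < l" "l < n" and same: "pivot k = pivot l" and nonzero: "eigvec k j \<noteq> 0"
  shows "eigvec l j = of_nat (card (pivot_child l))"
proof -
  have k: "0 < k" "k < n" using kl by auto
  have "j \<in> pivot l \<and> meets_below l (child (pivot l) j)"
    using eigvec_support[OF k nonzero]
  proof
    assume "j \<in> lower_part k"
    then obtain j' where "j \<in> pivot k" "j' \<in> child (pivot k) j" "j' < k"
      by (auto simp: lower_part_def meets_below_def)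
    then show ?thesis using kl same by (auto simp: meets_below_def intro!: bexI[of _ j'])
  next
    assume j: "j \<in> pivot_child k"
    then have "child (pivot k) j = pivot_child k"
      using mem_pivot_child_iff[OF k] pivot_child_subset[OF k] by blast
    moreover have "k \<in> pivot_child k" unfolding pivot_child_def by (rule mem_child)
    ultimately show ?thesis
      using j pivot_child_subset[OF k] kl same by (auto simp: meets_below_def)
  qed
  then show ?thesis using kl by (simp add: eigvec_def lower_part_def)
qed

lemma eigvec_orthogonal_less:
  assumes kl: "k < l" and l: "l < n"
  shows "(\<Sum>i<n. eigvec k i * eigvec l i) = 0"
proof (cases "k = 0")
  case True
  have "(\<Sum>i<n. eigvec l i * eigvec k i) = 0"
    using kl l True sum_eigvec[of l]
    by (intro sum_mult_eq_zero_if_constant_on_support[where c=1]) (auto simp: eigvec_zero)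
  then show ?thesis by (simp add: mult.commute)
next
  case False
  then have k: "0 < k" "k < n" and l': "0 < l" "l < n" using kl l by auto
  note orthogonal = sum_mult_eq_zero_if_constant_on_support[OF sum_eigvec]
  consider "pivot k \<inter> pivot l = {}" | "pivot k \<subset> pivot l" | "pivot k = pivot l" | "pivot l \<subset> pivot k"
    using laminar[OF pivot(1)[OF k] pivot(1)[OF l']] by blast
  then show ?thesis
  proof cases
    case 1
    then show ?thesis
      using eigvec_outside_pivot[OF k] eigvec_outside_pivot[OF l'] by (intro orthogonal[OF k]) blast
  next
    case 2
    then obtain c where "\<And>j. j \<in> pivot k \<Longrightarrow> eigvec l j = c"
      using eigvec_constant_on_inner_member[OF l' pivot(1)[OF k]] by blast
    then show ?thesis using eigvec_outside_pivot[OF k] by (intro orthogonal[OF k]) blast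
  next
    case 3
    then show ?thesis using eigvec_same_pivot[OF False[unfolded neq0_conv] kl l] by (intro orthogonal[OF k]) blast
  next
    case 4
    then obtain c where "\<And>j. j \<in> pivot l \<Longrightarrow> eigvec k j = c"
      using eigvec_constant_on_inner_member[OF k pivot(1)[OF l']] by blast
    then have "(\<Sum>i<n. eigvec l i * eigvec k i) = 0"
      using eigvec_outside_pivot[OF l'] by (intro orthogonal[OF l']) blast
    then show ?thesis by (simp add: mult.commute)
  qed
qed

lemma eigvec_orthogonal: "k < n \<Longrightarrow> l < n \<Longrightarrow> k \<noteq> l \<Longrightarrow> (\<Sum>i<n. eigvec k i * eigvec l i) = 0"
  using eigvec_orthogonal_less[of k l] eigvec_orthogonal_less[of l k]
  by (cases "k < l") (auto simp: mult.commute)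

lemma eigvec_self_inner_nonzero:
  assumes k: "k < n"
  shows "(\<Sum>i<n. eigvec k i * eigvec k i) \<noteq> 0"
proof -
  have "eigvec k k \<noteq> 0"
    using eigvec_diagonal_nonzero[of k] k by (cases "k = 0") (auto simp: eigvec_zero)
  then have "0 < eigvec k k * eigvec k k" by (simp add: zero_less_mult_iff linorder_neq_iff disj_commute)
  also have "\<dots> \<le> (\<Sum>i<n. eigvec k i * eigvec k i)"
    using k by (intro member_le_sum) auto
  finally show ?thesis by simp
qed

end

lemma sum_one_mat_left: "i < n \<Longrightarrow> (\<Sum>l<n. (1\<^sub>m n :: 'a::semiring_1 mat) $$ (i,l) * F l) = F i"
  by (simp add: if_distrib[of "\<lambda>x. x * _"] cong: if_cong)

lemma sum_one_mat_right: "j < n \<Longrightarrow> (\<Sum>l<n. F l * (1\<^sub>m n :: 'a::semiring_1 mat) $$ (l,j)) = F j"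
  by (simp add: if_distrib[of "\<lambda>x. _ * x"] cong: if_cong)

lemma one_mat_magic: "magic_with_sum n (1\<^sub>m n) 1"
  using sum_one_mat_left[of _ n "\<lambda>_. 1"] sum_one_mat_right[of _ n "\<lambda>_. 1"]
  by (simp add: magic_with_sum_def)

lemma sum_insert_None_image_Some:
  "finite R \<Longrightarrow> (\<Sum>x\<in>insert None (Some ` R). F x) = F None + (\<Sum>T\<in>R. F (Some T))"
  by (subst sum.insert) (auto simp: sum.reindex)

text \<open>Structure constants for the family \<open>I, A(T)\<close>, indexed by \<open>None\<close> and \<open>Some T\<close>.\<close>
definition I_or_A_coeff :: "nat set option \<Rightarrow> nat set option \<Rightarrow> nat set option \<Rightarrow> rat" where
  "I_or_A_coeff x y z = (case (x, y) of
       (None, _) \<Rightarrow> if z = y then 1 else 0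
     | (_, None) \<Rightarrow> if z = x then 1 else 0
     | (Some T, Some S) \<Rightarrow> (case z of None \<Rightarrow> 0 | Some U \<Rightarrow> A_coeff T S U))"

lemma I_or_A_coeff_commute: "I_or_A_coeff x y z = I_or_A_coeff y x z"
  unfolding I_or_A_coeff_def using A_coeff_commute by (auto split: option.splits)

context species
begin

lemma lin_indep_A_mat: "lin_indep_mat n (A_mat n) R"
  unfolding lin_indep_mat_def
proof (intro allI impI ballI)
  fix c T assume zero: "lincomb n (A_mat n) R c = 0\<^sub>m n n" and T: "T \<in> R"
  have "(\<Sum>T\<in>R. c T * A_mat n T $$ (i,j)) = 0" if "i < n" "j < n" for i j
    using arg_cong[OF zero, of "\<lambda>M. M $$ (i,j)"] that by simp
  then show "c T = 0" using coeffs_zero_if_offdiag_zero T by simp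
qed

lemma comm_subalgebra_span_A_mat: "comm_subalgebra (span_mat n (A_mat n) R)"
  by (rule comm_subalgebra_span_mat[OF A_mat_mult_eq_sum_A_coeff A_coeff_commute])

lemma span_A_mat_symmetric_diagonalizable_magic:
  assumes "M \<in> span_mat n (A_mat n) R"
  shows "symmetric_mat M \<and> diagonalizable M \<and> magic_with_sum n M 0"
proof -
  obtain c where M: "M = lincomb n (A_mat n) R c" using assms unfolding span_mat_def by auto
  have "symmetric_mat M" unfolding M by (rule symmetric_lincomb) (rule A_mat_symmetric)
  moreover have "diagonalizable M" unfolding M
    by (rule diagonalizable_lincomb_if_common_orthogonal_eigenbasis
          [OF eigvec_orthogonal eigvec_self_inner_nonzero eigvec_eigenvector_A_mat])
  moreover have "magic_with_sum n M (\<Sum>T\<in>R. c T * 0)" unfolding M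
    by (rule magic_lincomb) (rule A_mat_magic[OF member_subset])
  ultimately show ?thesis by simp
qed

lemma index_lincomb_I_or_A:
  assumes "i < n" "j < n"
  shows "lincomb n (I_or_A n) (insert None (Some ` R)) c $$ (i,j) =
           c None * (if i = j then 1 else 0) + (\<Sum>T\<in>R. c (Some T) * A_mat n T $$ (i,j))"
  using assms by (simp add: sum_insert_None_image_Some[OF finite_species] I_or_A_def)

lemma lin_indep_I_or_A: "lin_indep_mat n (I_or_A n) (insert None (Some ` R))"
  unfolding lin_indep_mat_def
proof (intro allI impI ballI)
  fix c x assume zero: "lincomb n (I_or_A n) (insert None (Some ` R)) c = 0\<^sub>m n n"
    and x: "x \<in> insert None (Some ` R)"
  have entry: "c None * (if i = j then 1 else 0) + (\<Sum>T\<in>R. c (Some T) * A_mat n T $$ (i,j)) = 0"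
    if "i < n" "j < n" for i j
    using arg_cong[OF zero, of "\<lambda>M. M $$ (i,j)"] index_lincomb_I_or_A[OF that] that by simp
  have offdiag: "(\<Sum>T\<in>R. c (Some T) * A_mat n T $$ (i,j)) = 0" if "i < n" "j < n" "i \<noteq> j" for i j
    using entry[OF that(1,2)] that(3) by (simp del: index_A_mat)
  have coeffs: "c (Some T) = 0" if "T \<in> R" for T
    by (rule coeffs_zero_if_offdiag_zero[of "\<lambda>T. c (Some T)", OF offdiag that])
  moreover have "(\<Sum>T\<in>R. c (Some T) * A_mat n T $$ (0,0)) = 0"
    using coeffs by (intro sum.neutral) simp
  then have "c None = 0" using entry[of 0 0] two_le_n by (simp del: index_A_mat)
  ultimately show "c x = 0" using x by auto
qed

lemma I_or_A_mult_eq_sum_coeff: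
  assumes x: "x \<in> insert None (Some ` R)" and y: "y \<in> insert None (Some ` R)"
    and i: "i < n" and j: "j < n"
  shows "(\<Sum>l<n. I_or_A n x $$ (i,l) * I_or_A n y $$ (l,j)) =
           (\<Sum>z\<in>insert None (Some ` R). I_or_A_coeff x y z * I_or_A n z $$ (i,j))"
proof -
  let ?K = "insert None (Some ` R)"
  have finite: "finite ?K" using finite_species by simp
  consider "x = None" | T where "x = Some T" "T \<in> R" "y = None"
    | T S where "x = Some T" "T \<in> R" "y = Some S" "S \<in> R"
    using x y by auto
  then show ?thesis
  proof cases
    case 1
    have "(\<Sum>z\<in>?K. I_or_A_coeff x y z * I_or_A n z $$ (i,j)) = I_or_A n y $$ (i,j)"
      using 1 y finite by (simp add: I_or_A_coeff_def if_distrib[of "\<lambda>x. x * _"] cong: if_cong)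
    then show ?thesis using 1 sum_one_mat_left[OF i] by (simp add: I_or_A_def)
  next
    case 2
    have "(\<Sum>z\<in>?K. I_or_A_coeff x y z * I_or_A n z $$ (i,j)) = I_or_A n x $$ (i,j)"
      using 2 x finite by (simp add: I_or_A_coeff_def if_distrib[of "\<lambda>x. x * _"] cong: if_cong)
    then show ?thesis using 2 sum_one_mat_right[OF j] by (simp add: I_or_A_def)
  next
    case 3
    then show ?thesis using A_mat_mult_eq_sum_A_coeff[OF _ _ i j]
      by (simp add: sum_insert_None_image_Some[OF finite_species] I_or_A_coeff_def I_or_A_def)
  qed
qed

lemma comm_subalgebra_span_I_or_A: "comm_subalgebra (span_mat n (I_or_A n) (insert None (Some ` R)))"
  by (rule comm_subalgebra_span_mat[OF I_or_A_mult_eq_sum_coeff I_or_A_coeff_commute])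

lemma span_I_or_A_symmetric_diagonalizable_magic:
  assumes "M \<in> span_mat n (I_or_A n) (insert None (Some ` R))"
  shows "symmetric_mat M \<and> diagonalizable M \<and> magic n M"
proof -
  obtain c where M: "M = lincomb n (I_or_A n) (insert None (Some ` R)) c"
    using assms unfolding span_mat_def by auto
  have "symmetric_mat M" unfolding M
    by (rule symmetric_lincomb) (auto simp: I_or_A_def A_mat_symmetric)
  moreover have "diagonalizable M" unfolding M
  proof (rule diagonalizable_lincomb_if_common_orthogonal_eigenbasis[OF eigvec_orthogonal eigvec_self_inner_nonzero])
    fix x k assume x: "x \<in> insert None (Some ` R)" and k: "k < n"
    show "\<exists>mu. \<forall>i<n. (\<Sum>j<n. I_or_A n x $$ (i,j) * eigvec k j) = mu * eigvec k i"
    proof (cases x)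
      case None
      then have "\<forall>i<n. (\<Sum>j<n. I_or_A n x $$ (i,j) * eigvec k j) = 1 * eigvec k i"
        using sum_one_mat_left[of _ n "eigvec k"] by (simp add: I_or_A_def)
      then show ?thesis by blast
    qed (use x k eigvec_eigenvector_A_mat in \<open>auto simp: I_or_A_def\<close>)
  qed
  moreover have "magic_with_sum n M (\<Sum>x\<in>insert None (Some ` R). c x * (if x = None then 1 else 0))"
    unfolding M
    by (rule magic_lincomb) (auto simp: I_or_A_def one_mat_magic A_mat_magic member_subset)
  ultimately show ?thesis unfolding magic_def by blast
qed

end

theorem mainTheorem7:
  fixes n :: nat and R :: "nat set set"
  assumes "species_of_tree n R"
  shows "(lin_indep_mat n (A_mat n) R \<and>
          comm_subalgebra (span_mat n (A_mat n) R) \<and>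
          (\<forall>M\<in>span_mat n (A_mat n) R.
              symmetric_mat M \<and> diagonalizable M \<and> magic_with_sum n M 0))
       \<and> (lin_indep_mat n (I_or_A n) (insert None (Some ` R)) \<and>
          comm_subalgebra (span_mat n (I_or_A n) (insert None (Some ` R))) \<and>
          (\<forall>M\<in>span_mat n (I_or_A n) (insert None (Some ` R)).
              symmetric_mat M \<and> diagonalizable M \<and> magic n M))"
proof -
  interpret species n R using assms by (rule species.intro)
  show ?thesis
    using lin_indep_A_mat comm_subalgebra_span_A_mat span_A_mat_symmetric_diagonalizable_magic
      lin_indep_I_or_A comm_subalgebra_span_I_or_A span_I_or_A_symmetric_diagonalizable_magic
    by blast
qed

end
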